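(* Let $k,r\geq 1$, let $1\le a\le b\le k$, let $1\le d\le r$, and let $I_d\subseteq\{1,\dots,r\}$ with $|I_d|=d$. Then for every $n\geq k$, $$\Bigl|S_n^{(r)}\Bigl(\bigcup_{m=a}^{b}T_{k,r}^m(I_d)\Bigr)\Bigr|=(k-1)!\,r^{k-1}\prod_{j=k}^n\bigl(d(k+a-b-1)+j(r-d)\bigr).$$
   Context: For $n,r\ge1$, $S_n^{(r)}$ denotes the set of coloured permutations of length $n$ with $r$ colours: sequences $\phi=(\phi_1,\dots,\phi_n)$ where $\phi_i=a_i^{(c_i)}$, $(a_1,\dots,a_n)$ is a permutation of $\{1,\dots,n\}$ and each $c_i\in\{1,\dots,r\}$ is the colour of $a_i$. For $\phi=(\tau_1^{(s_1)},\dots,\tau_k^{(s_k)})\in S_k^{(r)}$ and $\psi=(\alpha_1^{(v_1)},\dots,\alpha_n^{(v_n)})\in S_n^{(r)}$, an occurrence of $\phi$ in $\psi$ is a sequence of indices $1\le i_1<\dots<i_k\le n$ such that $(\alpha_{i_1},\dots,\alpha_{i_k})$ is order-isomorphic to $(\tau_1,\dots,\tau_k)$ and $v_{i_j}=s_j$ for all $j$. $\psi$ contains $\phi$ if there is at least one occurrence, and avoids $\phi$ otherwise. For a set $T$ of coloured patterns, $S_n^{(r)}(T)$ is the set of $\psi\in S_n^{(r)}$ avoiding every $\phi\in T$. For $I_d\subseteq\{1,\dots,r\}$ with $|I_d|=d$ and $1\le m\le k$, $T_{k,r}^m(I_d)$ is the set of all $\phi\in S_k^{(r)}$ whose first entry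 is $\phi_1=m^{(c)}$ for some colour $c\in I_d$. *)

theory Defs
  imports Main
begin

definition colperms :: "nat \<Rightarrow> nat \<Rightarrow> (nat \<times> nat) list set" where
  "colperms n r = {xs. length xs = n \<and> distinct (map fst xs) \<and> set (map fst xs) = {1..n}
                      \<and> (\<forall>x\<in>set xs. snd x \<in> {1..r})}"

definition contains :: "(nat \<times> nat) list \<Rightarrow> (nat \<times> nat) list \<Rightarrow> bool" where
  "contains phi psi = (\<exists>idx :: nat \<Rightarrow> nat.
      strict_mono_on {..<length phi} idx
    \<and> (\<forall>j<length phi. idx j < length psi)
    \<and> (\<forall>j<length phi. \<forall>l<length phi.
          (fst (psi ! idx j) < fst (psi ! idx l)) = (fst (phi ! j) < fst (phi ! l)))
    \<and> (\<forall>j<length phi. snd (psi ! idx j) = snd (phi ! j)))"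

definition avoiders :: "nat \<Rightarrow> nat \<Rightarrow> (nat \<times> nat) list set \<Rightarrow> (nat \<times> nat) list set" where
  "avoiders n r T = {psi \<in> colperms n r. \<forall>phi\<in>T. \<not> contains phi psi}"

definition Tset :: "nat \<Rightarrow> nat \<Rightarrow> nat \<Rightarrow> nat set \<Rightarrow> (nat \<times> nat) list set" where
  "Tset k r m I = {phi \<in> colperms k r. \<exists>c\<in>I. phi ! 0 = (m, c)}"

end

theory Submission
  imports Defs
begin

(* Restricting psi to any k of its positions and replacing the letters there by their ranks
   gives a pattern of S_k^(r) that psi contains. Hence psi contains a pattern of T^m_{k,r}(I_d)
   iff some entry with colour in I_d is followed by at least m - 1 smaller and at least k - m
   larger letters, and avoiding the union over m in [a, b] is a condition on each entry, its
   colour and its rank among the letters after it. A word on N letters is its first entry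
   followed by a word on the other N - 1 letters. If N < k all N r first entries are
   admissible; otherwise exactly the d colours of I_d combined with the N - (k + a - b - 1)
   ranks in [a - 1, b + N - k - 1] are excluded, leaving d (k + a - b - 1) + N (r - d).
   The count is the product of these numbers for N = 1, ..., n. *)

definition rank :: "'a::linorder set \<Rightarrow> 'a \<Rightarrow> nat" where
  "rank V x = card {v\<in>V. v < x}"

lemma rank_less_rank_iff:
  assumes "finite V" "x \<in> V" "y \<in> V"
  shows "rank V x < rank V y \<longleftrightarrow> x < y"
proof
  assume "x < y"
  then show "rank V x < rank V y"
    unfolding rank_def by (intro psubset_card_mono) (use assms in auto)
next
  assume "rank V x < rank V y"
  moreover have "rank V y \<le> rank V x" if "y \<le> x"
    unfolding rank_def by (intro card_mono) (use assms that in auto)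
  ultimately show "x < y" by force
qed

lemma bij_betw_rank:
  assumes "finite V"
  shows "bij_betw (rank V) V {..<card V}"
proof -
  have inj: "inj_on (rank V) V"
    by (rule inj_onI) (metis assms linorder_neq_iff rank_less_rank_iff less_irrefl)
  have "rank V ` V \<subseteq> {..<card V}"
    unfolding rank_def using assms by (auto intro!: psubset_card_mono)
  moreover have "card (rank V ` V) = card {..<card V}"
    using card_image[OF inj] by simp
  ultimately have "rank V ` V = {..<card V}"
    by (intro card_subset_eq) simp_all
  with inj show ?thesis
    by (simp add: bij_betw_def)
qed

lemma card_filter_nth:
  assumes "distinct xs"
  shows "card {j\<in>{..<length xs}. P (xs ! j)} = card {v\<in>set xs. P v}"
  using length_filter_conv_card[of P xs] distinct_length_filter[OF assms, of P]
  by (simp add: Int_commute Collect_conj_eq)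

lemma image_Collect_filter: "{y\<in>f ` A. P y} = f ` {x\<in>A. P (f x)}"
  by auto

lemma set_drop_eq_image_nth: "set (drop n xs) = (!) xs ` {n..<length xs}"
proof (intro set_eqI iffI)
  fix p assume "p \<in> set (drop n xs)"
  then obtain t where "t < length xs - n" "p = xs ! (n + t)"
    by (auto simp: in_set_conv_nth)
  then show "p \<in> (!) xs ` {n..<length xs}"
    by (intro image_eqI[of _ _ "n + t"]) auto
next
  fix p assume "p \<in> (!) xs ` {n..<length xs}"
  then obtain j where "n \<le> j" "j < length xs" "p = xs ! j" by auto
  then show "p \<in> set (drop n xs)"
    using nth_mem[of "j - n" "drop n xs"] by simp
qed

lemma card_filter_drop_fst:
  assumes "distinct (map fst ps)"
  shows "card {y\<in>fst ` set (drop (Suc i) ps). P y} = card {j\<in>{i<..<length ps}. P (fst (ps ! j))}"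
proof -
  have "{Suc i..<length ps} = {i<..<length ps}" by auto
  then have "fst ` set (drop (Suc i) ps) = (\<lambda>j. fst (ps ! j)) ` {i<..<length ps}"
    by (simp add: set_drop_eq_image_nth image_image)
  moreover have "inj_on (\<lambda>j. fst (ps ! j)) {j\<in>{i<..<length ps}. P (fst (ps ! j))}"
    using inj_on_nth[OF assms, of "{j\<in>{i<..<length ps}. P (fst (ps ! j))}"]
    by (simp add: inj_on_def)
  ultimately show ?thesis
    by (simp only: image_Collect_filter card_image)
qed

fun entries_avoid :: "('a \<Rightarrow> 'c \<Rightarrow> 'a set \<Rightarrow> bool) \<Rightarrow> ('a \<times> 'c) list \<Rightarrow> bool" where
  "entries_avoid bad [] = True"
| "entries_avoid bad (p # ps) \<longleftrightarrow> \<not> bad (fst p) (snd p) (fst ` set ps) \<and> entries_avoid bad ps"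

lemma entries_avoid_iff_nth:
  "entries_avoid bad ps \<longleftrightarrow>
     (\<forall>i<length ps. \<not> bad (fst (ps ! i)) (snd (ps ! i)) (fst ` set (drop (Suc i) ps)))"
  by (induction ps) (auto simp: less_Suc_eq_0_disj)

definition coloured_words :: "'a set \<Rightarrow> 'c set \<Rightarrow> ('a \<times> 'c) list set" where
  "coloured_words S C = {ps. distinct (map fst ps) \<and> fst ` set ps = S \<and> snd ` set ps \<subseteq> C}"

lemma length_eq_card_fst_set:
  assumes "distinct (map fst ps)"
  shows "length ps = card (fst ` set ps)"
  using distinct_card[OF assms] by simp

lemma colperms_eq_coloured_words: "colperms n r = coloured_words {1..n} {1..r}"
  by (auto simp: colperms_def coloured_words_def dest: length_eq_card_fst_set)

lemma finite_coloured_words: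
  assumes "finite S" "finite C"
  shows "finite (coloured_words S C)"
proof (rule finite_subset)
  show "coloured_words S C \<subseteq> {xs. set xs \<subseteq> S \<times> C \<and> length xs = card S}"
    by (force simp: coloured_words_def dest: length_eq_card_fst_set)
  show "finite {xs. set xs \<subseteq> S \<times> C \<and> length xs = card S}"
    using assms by (intro finite_lists_length_eq) simp
qed

lemma coloured_words_entries_avoid_Cons:
  assumes "S \<noteq> {}"
  shows "{ps\<in>coloured_words S C. entries_avoid bad ps} =
    (\<Union>p\<in>{p\<in>S \<times> C. \<not> bad (fst p) (snd p) (S - {fst p})}.
       Cons p ` {ps\<in>coloured_words (S - {fst p}) C. entries_avoid bad ps})"
proof (intro equalityI subsetI)
  fix ps assume ps: "ps \<in> {ps\<in>coloured_words S C. entries_avoid bad ps}"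
  then obtain p rest where p_rest: "ps = p # rest"
    using assms by (cases ps) (auto simp: coloured_words_def)
  have "fst p \<notin> fst ` set rest" "insert (fst p) (fst ` set rest) = S"
    using ps p_rest by (simp_all add: coloured_words_def)
  then have rest: "fst ` set rest = S - {fst p}" by blast
  have "p \<in> S \<times> C" "\<not> bad (fst p) (snd p) (S - {fst p})"
    using ps p_rest rest by (auto simp: coloured_words_def mem_Times_iff)
  moreover have "rest \<in> {ps\<in>coloured_words (S - {fst p}) C. entries_avoid bad ps}"
    using ps p_rest rest by (auto simp: coloured_words_def)
  ultimately show "ps \<in> (\<Union>p\<in>{p\<in>S \<times> C. \<not> bad (fst p) (snd p) (S - {fst p})}.
       Cons p ` {ps\<in>coloured_words (S - {fst p}) C. entries_avoid bad ps})"
    using p_rest by blast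
next
  fix ps assume "ps \<in> (\<Union>p\<in>{p\<in>S \<times> C. \<not> bad (fst p) (snd p) (S - {fst p})}.
       Cons p ` {ps\<in>coloured_words (S - {fst p}) C. entries_avoid bad ps})"
  then obtain p rest where p: "p \<in> S \<times> C" "\<not> bad (fst p) (snd p) (S - {fst p})"
    and rest: "rest \<in> coloured_words (S - {fst p}) C" "entries_avoid bad rest"
    and p_rest: "ps = p # rest"
    by blast
  have "fst ` set rest = S - {fst p}" using rest(1) by (simp add: coloured_words_def)
  then show "ps \<in> {ps\<in>coloured_words S C. entries_avoid bad ps}"
    using p rest p_rest by (auto simp: coloured_words_def mem_Times_iff)
qed

lemma card_coloured_words_entries_avoid:
  assumes "finite S" "finite C"
    and safe: "\<And>T. T \<subseteq> S \<Longrightarrow> T \<noteq> {} \<Longrightarrow>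
                 card {p\<in>T \<times> C. \<not> bad (fst p) (snd p) (T - {fst p})} = g (card T)"
  shows "card {ps\<in>coloured_words S C. entries_avoid bad ps} = (\<Prod>s=1..card S. g s)"
  using assms
proof (induction "card S" arbitrary: S)
  case 0
  then have "{ps\<in>coloured_words S C. entries_avoid bad ps} = {[]}"
    by (auto simp: coloured_words_def)
  then show ?case using 0 by simp
next
  case (Suc N)
  define Safe where "Safe = {p\<in>S \<times> C. \<not> bad (fst p) (snd p) (S - {fst p})}"
  have S: "S \<noteq> {}" using Suc.hyps(2) by auto
  have "finite Safe" using Suc.prems(1,2) by (simp add: Safe_def)
  have tail: "card {ps\<in>coloured_words (S - {fst p}) C. entries_avoid bad ps} = (\<Prod>s=1..N. g s)"
    if "p \<in> Safe" for p
  proof -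
    have N: "N = card (S - {fst p})" using that Suc.hyps(2) Suc.prems(1) by (auto simp: Safe_def)
    have "T \<subseteq> S - {fst p} \<Longrightarrow> T \<noteq> {} \<Longrightarrow>
            card {p\<in>T \<times> C. \<not> bad (fst p) (snd p) (T - {fst p})} = g (card T)" for T
      using Suc.prems(3) by blast
    with Suc.hyps(1)[OF N] Suc.prems(1,2) N show ?thesis by simp
  qed
  have "card {ps\<in>coloured_words S C. entries_avoid bad ps} =
        (\<Sum>p\<in>Safe. card (Cons p ` {ps\<in>coloured_words (S - {fst p}) C. entries_avoid bad ps}))"
    unfolding coloured_words_entries_avoid_Cons[OF S] Safe_def[symmetric]
  proof (rule card_UN_disjoint)
    show "finite Safe" by fact
    show "\<forall>p\<in>Safe. finite (Cons p ` {ps\<in>coloured_words (S - {fst p}) C. entries_avoid bad ps})"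
      using Suc.prems(1,2) by (intro ballI finite_imageI) (simp add: finite_coloured_words)
  next
    show "\<forall>p\<in>Safe. \<forall>q\<in>Safe. p \<noteq> q \<longrightarrow>
            Cons p ` {ps\<in>coloured_words (S - {fst p}) C. entries_avoid bad ps} \<inter>
            Cons q ` {ps\<in>coloured_words (S - {fst q}) C. entries_avoid bad ps} = {}"
      by blast
  qed
  also have "\<dots> = card Safe * (\<Prod>s=1..N. g s)"
    using tail by (simp add: card_image)
  also have "card Safe = g (Suc N)"
    using Suc.prems(3)[of S] S Suc.hyps(2) by (simp add: Safe_def)
  finally show ?case
    by (simp add: Suc.hyps(2)[symmetric] prod.nat_ivl_Suc')
qed

definition subpattern :: "(nat \<times> nat) list \<Rightarrow> nat set \<Rightarrow> (nat \<times> nat) list" where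
  "subpattern psi P =
     map (\<lambda>j. (Suc (rank ((\<lambda>i. fst (psi ! i)) ` P) (fst (psi ! j))), snd (psi ! j)))
       (sorted_list_of_set P)"

lemma contains_subpattern:
  assumes "P \<subseteq> {..<length psi}"
  shows "contains (subpattern psi P) psi"
proof -
  define sl where "sl = sorted_list_of_set P"
  define V where "V = (\<lambda>i. fst (psi ! i)) ` P"
  have finP: "finite P" using assms finite_subset by blast
  have len: "length sl = card P" and set_sl: "set sl = P"
    unfolding sl_def using finP by simp_all
  have "sorted_wrt (<) sl" unfolding sl_def by simp
  then have mono: "strict_mono_on {..<card P} ((!) sl)"
    using len by (auto simp: strict_mono_on_def sorted_wrt_iff_nth_less)
  have in_P: "sl ! j \<in> P" if "j < card P" for j
    using that len set_sl by (metis nth_mem)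
  show ?thesis
    unfolding contains_def
  proof (intro exI[of _ "(!) sl"] conjI allI impI)
    show "strict_mono_on {..<length (subpattern psi P)} ((!) sl)"
      using mono len by (simp add: subpattern_def sl_def)
    fix j assume j: "j < length (subpattern psi P)"
    then have j': "j < card P" using len by (simp add: subpattern_def sl_def)
    show "sl ! j < length psi" using in_P[OF j'] assms by auto
    show "snd (psi ! (sl ! j)) = snd (subpattern psi P ! j)"
      using j' len by (simp add: subpattern_def sl_def)
    fix l assume "l < length (subpattern psi P)"
    then have l': "l < card P" using len by (simp add: subpattern_def sl_def)
    have "fst (psi ! (sl ! j)) \<in> V" "fst (psi ! (sl ! l)) \<in> V"
      using in_P[OF j'] in_P[OF l'] by (auto simp: V_def)
    then show "(fst (psi ! (sl ! j)) < fst (psi ! (sl ! l))) =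
               (fst (subpattern psi P ! j) < fst (subpattern psi P ! l))"
      using j' l' len rank_less_rank_iff[of V] finP
      by (simp add: subpattern_def sl_def V_def)
  qed
qed

lemma subpattern_in_colperms:
  assumes "distinct (map fst psi)" "P \<subseteq> {..<length psi}" "\<forall>p\<in>set psi. snd p \<in> {1..r}"
  shows "subpattern psi P \<in> colperms (card P) r"
proof -
  define letter where "letter i = fst (psi ! i)" for i
  define V where "V = letter ` P"
  have finP: "finite P" using assms(2) finite_subset by blast
  have inj_letter: "inj_on letter P"
    using inj_on_nth[OF assms(1), of P] assms(2) by (auto simp: inj_on_def letter_def)
  then have cardV: "card V = card P" by (simp add: V_def card_image)
  have bij: "bij_betw (rank V \<circ> letter) P {..<card P}"
    using bij_betw_trans[OF inj_on_imp_bij_betw[OF inj_letter] bij_betw_rank] finP cardV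
    by (simp add: V_def)
  have map_fst: "map fst (subpattern psi P) = map (Suc \<circ> (rank V \<circ> letter)) (sorted_list_of_set P)"
    by (simp add: subpattern_def V_def letter_def)
  have "inj_on (Suc \<circ> (rank V \<circ> letter)) P"
    using bij bij_betw_imp_inj_on comp_inj_on inj_Suc inj_on_subset by blast
  then have "distinct (map fst (subpattern psi P))"
    using finP by (simp only: map_fst distinct_map) simp
  moreover have "(Suc \<circ> (rank V \<circ> letter)) ` P = {1..card P}"
    by (metis bij bij_betw_def image_Suc_lessThan image_comp)
  then have "set (map fst (subpattern psi P)) = {1..card P}"
    using finP by (simp only: map_fst set_map) simp
  moreover have "length (subpattern psi P) = card P"
    using finP by (simp add: subpattern_def)
  moreover have "snd q \<in> {1..r}" if "q \<in> set (subpattern psi P)" for q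
    using that assms(2,3) finP by (auto simp: subpattern_def)
  ultimately show ?thesis
    by (simp add: colperms_def)
qed

lemma subpattern_nth_0:
  assumes "finite P" "P \<noteq> {}"
  shows "subpattern psi P ! 0 =
           (Suc (rank ((\<lambda>i. fst (psi ! i)) ` P) (fst (psi ! Min P))), snd (psi ! Min P))"
  using sorted_list_of_set_nonempty[OF assms] by (simp add: subpattern_def)

definition pattern_head :: "nat \<Rightarrow> nat \<Rightarrow> nat set \<Rightarrow> nat \<Rightarrow> nat \<Rightarrow> nat set \<Rightarrow> bool" where
  "pattern_head k m I x c Y \<longleftrightarrow> c \<in> I \<and> m - 1 \<le> card {y\<in>Y. y < x} \<and> k - m \<le> card {y\<in>Y. x < y}"

lemma card_colperm_filter:
  assumes "phi \<in> colperms k r"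
  shows "card {j\<in>{..<k}. P (fst (phi ! j))} = card {v\<in>{1..k}. P v}"
proof -
  have "length phi = k" "distinct (map fst phi)" "set (map fst phi) = {1..k}"
    using assms by (simp_all add: colperms_def)
  moreover have "{j\<in>{..<k}. P (fst (phi ! j))} = {j\<in>{..<length (map fst phi)}. P (map fst phi ! j)}"
    using calculation by auto
  ultimately show ?thesis
    using card_filter_nth[of "map fst phi" P] by simp
qed

lemma card_filter_le_strict_mono:
  fixes idx :: "nat \<Rightarrow> nat"
  assumes mono: "strict_mono_on {..<k} idx" and lt: "\<forall>j<k. idx j < n"
    and Q: "\<And>j. j < k \<Longrightarrow> Q j \<Longrightarrow> 0 < j \<and> Q' (idx j)"
  shows "card {j\<in>{..<k}. Q j} \<le> card {j\<in>{idx 0<..<n}. Q' j}"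
proof (rule card_inj_on_le)
  show "inj_on idx {j\<in>{..<k}. Q j}"
    using strict_mono_on_imp_inj_on[OF mono] by (rule inj_on_subset) auto
  show "idx ` {j\<in>{..<k}. Q j} \<subseteq> {j\<in>{idx 0<..<n}. Q' j}"
    using Q lt mono by (fastforce simp: strict_mono_on_def)
qed simp

lemma contains_Tset_imp_pattern_head:
  assumes phi: "phi \<in> Tset k r m I" and occ: "contains phi psi"
    and k: "1 \<le> k" and dist: "distinct (map fst psi)"
  shows "\<exists>i<length psi. pattern_head k m I (fst (psi ! i)) (snd (psi ! i)) (fst ` set (drop (Suc i) psi))"
proof -
  obtain c where c: "c \<in> I" "phi ! 0 = (m, c)" and perm: "phi \<in> colperms k r"
    using phi by (auto simp: Tset_def)
  have len: "length phi = k" using perm by (simp add: colperms_def)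
  obtain idx where mono: "strict_mono_on {..<k} idx" and idx_lt: "\<forall>j<k. idx j < length psi"
    and iso: "\<forall>j<k. \<forall>l<k. (fst (psi ! idx j) < fst (psi ! idx l)) = (fst (phi ! j) < fst (phi ! l))"
    and col: "\<forall>j<k. snd (psi ! idx j) = snd (phi ! j)"
    using occ len by (auto simp: contains_def)
  define i where "i = idx 0"
  define x where "x = fst (psi ! i)"
  have "m \<in> set (map fst phi)" using c k len by (force simp: in_set_conv_nth)
  then have m: "1 \<le> m" "m \<le> k" using perm by (auto simp: colperms_def)
  have cmp: "fst (psi ! idx j) < x \<longleftrightarrow> fst (phi ! j) < m" "x < fst (psi ! idx j) \<longleftrightarrow> m < fst (phi ! j)"
    if "j < k" for j
    using iso[rule_format, of j 0] iso[rule_format, of 0 j] that k c(2) by (simp_all add: i_def x_def)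
  have pos: "0 < j" if "fst (phi ! j) \<noteq> m" for j
    using that c(2) by (cases j) auto
  have "{v\<in>{1..k}. v < m} = {1..<m}" using m by auto
  then have "m - 1 = card {v\<in>{1..k}. v < m}" by simp
  also have "\<dots> \<le> card {j\<in>{i<..<length psi}. fst (psi ! j) < x}"
    unfolding card_colperm_filter[OF perm, symmetric] i_def
    by (rule card_filter_le_strict_mono[OF mono idx_lt]) (use cmp pos in force)
  finally have less: "m - 1 \<le> card {j\<in>{i<..<length psi}. fst (psi ! j) < x}" .
  have "{v\<in>{1..k}. m < v} = {m<..k}" by auto
  then have "k - m = card {v\<in>{1..k}. m < v}" by simp
  also have "\<dots> \<le> card {j\<in>{i<..<length psi}. x < fst (psi ! j)}"
    unfolding card_colperm_filter[OF perm, symmetric] i_def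
    by (rule card_filter_le_strict_mono[OF mono idx_lt]) (use cmp pos in force)
  finally have greater: "k - m \<le> card {j\<in>{i<..<length psi}. x < fst (psi ! j)}" .
  have "i < length psi" "snd (psi ! i) = c"
    using idx_lt col c k by (auto simp: i_def)
  then show ?thesis
    using less greater c(1) card_filter_drop_fst[OF dist]
    by (auto simp: pattern_head_def x_def)
qed

lemma pattern_head_imp_contains_Tset:
  assumes dist: "distinct (map fst psi)" and col: "\<forall>p\<in>set psi. snd p \<in> {1..r}"
    and i: "i < length psi" and m: "1 \<le> m" "m \<le> k"
    and head: "pattern_head k m I (fst (psi ! i)) (snd (psi ! i)) (fst ` set (drop (Suc i) psi))"
  shows "\<exists>phi\<in>Tset k r m I. contains phi psi"
proof -
  define letter where "letter j = fst (psi ! j)" for j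
  define x where "x = letter i"
  have inj_letter: "inj_on letter {..<length psi}"
    using inj_on_nth[OF dist, of "{..<length psi}"] by (simp add: inj_on_def letter_def)
  have "m - 1 \<le> card {j\<in>{i<..<length psi}. letter j < x}"
    using head card_filter_drop_fst[OF dist] by (simp add: pattern_head_def letter_def x_def)
  then obtain A where A: "A \<subseteq> {j\<in>{i<..<length psi}. letter j < x}" "card A = m - 1"
    by (meson obtain_subset_with_card_n)
  have "k - m \<le> card {j\<in>{i<..<length psi}. x < letter j}"
    using head card_filter_drop_fst[OF dist] by (simp add: pattern_head_def letter_def x_def)
  then obtain B where B: "B \<subseteq> {j\<in>{i<..<length psi}. x < letter j}" "card B = k - m"
    by (meson obtain_subset_with_card_n)
  define P where "P = insert i (A \<union> B)"
  have P_sub: "P \<subseteq> {..<length psi}" using A(1) B(1) i by (auto simp: P_def)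
  then have finite: "finite A" "finite B" "finite P"
    by (auto simp: P_def finite_subset)
  have "i \<notin> A \<union> B" "A \<inter> B = {}" using A(1) B(1) by fastforce+
  then have card_P: "card P = k"
    using A(2) B(2) m finite by (simp add: P_def card_Un_disjoint)
  have Min_P: "Min P = i"
    using A(1) B(1) finite by (intro Min_eqI) (auto simp: P_def)
  have "{v\<in>letter ` P. v < x} = letter ` A"
    using A(1) B(1) by (auto simp: P_def x_def)
  moreover have "inj_on letter A" using inj_letter by (rule inj_on_subset) (use A(1) in auto)
  ultimately have rank_x: "rank (letter ` P) x = m - 1"
    by (simp add: rank_def card_image A(2))
  have "subpattern psi P ! 0 = (m, snd (psi ! i))"
    using subpattern_nth_0[OF finite(3)] Min_P rank_x m
    by (auto simp: P_def letter_def x_def)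
  then have "subpattern psi P \<in> Tset k r m I"
    using subpattern_in_colperms[OF dist P_sub col] card_P head
    by (simp add: Tset_def pattern_head_def)
  then show ?thesis using contains_subpattern[OF P_sub] by blast
qed

lemma contains_Tset_iff_pattern_head:
  assumes "distinct (map fst psi)" "\<forall>p\<in>set psi. snd p \<in> {1..r}" "1 \<le> m" "m \<le> k"
  shows "(\<exists>phi\<in>Tset k r m I. contains phi psi) \<longleftrightarrow>
           (\<exists>i<length psi. pattern_head k m I (fst (psi ! i)) (snd (psi ! i))
                                          (fst ` set (drop (Suc i) psi)))"
    (is "?contains \<longleftrightarrow> ?head")
proof
  assume ?contains
  then show ?head using contains_Tset_imp_pattern_head assms by (meson le_trans)
next
  assume ?head
  then show ?contains using pattern_head_imp_contains_Tset assms by blast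
qed

lemma card_filter_rank:
  assumes "finite V"
  shows "card {x\<in>V. Q (rank V x)} = card {t\<in>{..<card V}. Q t}"
proof -
  have "rank V ` V = {..<card V}" and inj: "inj_on (rank V) V"
    using bij_betw_rank[OF assms] by (simp_all add: bij_betw_def)
  then have "{t\<in>{..<card V}. Q t} = rank V ` {x\<in>V. Q (rank V x)}"
    by (metis image_Collect_filter)
  then show ?thesis
    using inj by (simp add: card_image inj_on_subset)
qed

lemma card_greater_eq_rank:
  fixes T :: "'a::linorder set"
  assumes "finite T" "x \<in> T"
  shows "card {y\<in>T - {x}. x < y} = card T - 1 - rank T x"
proof -
  have "rank T x + card {y\<in>T - {x}. x < y} = card ({y\<in>T. y < x} \<union> {y\<in>T - {x}. x < y})"
    unfolding rank_def using assms(1) by (intro card_Un_disjoint[symmetric]) auto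
  also have "{y\<in>T. y < x} \<union> {y\<in>T - {x}. x < y} = T - {x}" by auto
  finally have "rank T x + card {y\<in>T - {x}. x < y} = card T - 1"
    using assms by simp
  then show ?thesis by simp
qed

lemma ex_pattern_head_iff:
  fixes T :: "nat set"
  assumes "finite T" "x \<in> T" "1 \<le> a" "a \<le> b" "b \<le> k"
  shows "(\<exists>m\<in>{a..b}. pattern_head k m I x c (T - {x})) \<longleftrightarrow>
           c \<in> I \<and> k \<le> card T \<and> a - 1 \<le> rank T x \<and> rank T x + k < b + card T"
proof -
  have less: "card {y\<in>T - {x}. y < x} = rank T x"
    unfolding rank_def by (rule arg_cong[where f = card]) auto
  have "rank T x < card T"
    using bij_betw_apply[OF bij_betw_rank[OF assms(1)] assms(2)] by simp
  then have "(\<exists>m\<in>{a..b}. m - 1 \<le> rank T x \<and> k - m \<le> card T - 1 - rank T x) \<longleftrightarrow>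
               k \<le> card T \<and> a - 1 \<le> rank T x \<and> rank T x + k < b + card T"
    using assms(3-5) by (auto intro!: bexI[of _ "max a (rank T x + 1 + k - card T)"])
  then show ?thesis
    using less card_greater_eq_rank[OF assms(1,2)] by (auto simp: pattern_head_def)
qed

lemma diff_mult_diff_eq:
  fixes N c d v :: nat
  assumes "d \<le> c" "v \<le> N"
  shows "N * c - (N - v) * d = d * v + N * (c - d)"
proof -
  obtain e where "c = d + e" using assms(1) le_Suc_ex by blast
  moreover obtain w where "N = v + w" using assms(2) le_Suc_ex by blast
  ultimately show ?thesis by (simp add: algebra_simps)
qed

lemma card_safe_entries:
  fixes T :: "nat set"
  assumes T: "finite T" and abk: "1 \<le> a" "a \<le> b" "b \<le> k" and C: "I \<subseteq> C" "finite C"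
  shows "card {p\<in>T \<times> C. \<not> (\<exists>m\<in>{a..b}. pattern_head k m I (fst p) (snd p) (T - {fst p}))} =
         (if card T < k then card T * card C
          else card I * (k + a - b - 1) + card T * (card C - card I))"
proof -
  define N where "N = card T"
  define Q where "Q t \<longleftrightarrow> k \<le> N \<and> a - 1 \<le> t \<and> t + k < b + N" for t
  have bad_iff: "(\<exists>m\<in>{a..b}. pattern_head k m I x c (T - {x})) \<longleftrightarrow> c \<in> I \<and> Q (rank T x)"
    if "x \<in> T" for x c
    using ex_pattern_head_iff[OF T that abk] by (simp add: Q_def N_def)
  have "{p\<in>T \<times> C. \<not> (\<exists>m\<in>{a..b}. pattern_head k m I (fst p) (snd p) (T - {fst p}))} =
        T \<times> C - {x\<in>T. Q (rank T x)} \<times> I" (is "?Safe = _")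
  proof (rule set_eqI)
    fix p :: "nat \<times> nat"
    obtain x c where p: "p = (x, c)" by fastforce
    show "p \<in> ?Safe \<longleftrightarrow> p \<in> T \<times> C - {x\<in>T. Q (rank T x)} \<times> I"
      using bad_iff[of x c] unfolding p
      by (simp only: mem_Collect_eq mem_Times_iff Diff_iff fst_conv snd_conv) blast
  qed
  moreover have "{x\<in>T. Q (rank T x)} \<times> I \<subseteq> T \<times> C" using C(1) by auto
  moreover have "finite I" using C finite_subset by blast
  ultimately have safe: "card ?Safe = N * card C - card {t\<in>{..<N}. Q t} * card I"
    using T C(2) by (simp add: card_Diff_subset card_cartesian_product card_filter_rank N_def)
  show ?thesis
  proof (cases "N < k")
    case True
    then have "{t\<in>{..<N}. Q t} = {}" by (auto simp: Q_def)
    then show ?thesis using safe True by (simp only: card.empty) (simp add: N_def)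
  next
    case False
    define v where "v = k + a - b - 1"
    have "{t\<in>{..<N}. Q t} = {a - 1..<b + N - k}" using abk False by (auto simp: Q_def)
    then have "card {t\<in>{..<N}. Q t} = N - v" using abk False by (simp add: v_def)
    then have "card ?Safe = N * card C - (N - v) * card I" using safe by simp
    also have "\<dots> = card I * v + N * (card C - card I)"
      using card_mono[OF C(2,1)] abk False by (intro diff_mult_diff_eq) (simp_all add: v_def)
    finally show ?thesis using False by (simp add: N_def v_def)
  qed
qed

lemma avoiders_Union_Tset:
  assumes "1 \<le> a" "b \<le> k"
  shows "avoiders n r (\<Union>m\<in>{a..b}. Tset k r m I) =
    {ps\<in>coloured_words {1..n} {1..r}.
       entries_avoid (\<lambda>x c Y. \<exists>m\<in>{a..b}. pattern_head k m I x c Y) ps}"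
proof -
  have "(\<forall>phi\<in>(\<Union>m\<in>{a..b}. Tset k r m I). \<not> contains phi ps) \<longleftrightarrow>
          entries_avoid (\<lambda>x c Y. \<exists>m\<in>{a..b}. pattern_head k m I x c Y) ps"
    if "ps \<in> coloured_words {1..n} {1..r}" for ps
  proof -
    have "distinct (map fst ps)" "\<forall>p\<in>set ps. snd p \<in> {1..r}"
      using that by (auto simp: coloured_words_def)
    then have "(\<exists>phi\<in>Tset k r m I. contains phi ps) \<longleftrightarrow>
        (\<exists>i<length ps. pattern_head k m I (fst (ps ! i)) (snd (ps ! i)) (fst ` set (drop (Suc i) ps)))"
      if "m \<in> {a..b}" for m
      using contains_Tset_iff_pattern_head that assms by auto
    then show ?thesis
      unfolding entries_avoid_iff_nth by blast
  qed
  then show ?thesis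
    by (auto simp: avoiders_def colperms_eq_coloured_words)
qed

lemma prod_if_less_split:
  fixes r :: nat
  assumes "1 \<le> k" "k \<le> n"
  shows "(\<Prod>N=1..n. if N < k then N * r else f N) = fact (k - 1) * r ^ (k - 1) * (\<Prod>N=k..n. f N)"
proof -
  have "{1..n} = {1..k - 1} \<union> {k..n}" using assms by auto
  then have "(\<Prod>N=1..n. if N < k then N * r else f N) =
               (\<Prod>N=1..k - 1. if N < k then N * r else f N) * (\<Prod>N=k..n. if N < k then N * r else f N)"
    by (simp add: prod.union_disjoint ivl_disj_int_two)
  also have "(\<Prod>N=1..k - 1. if N < k then N * r else f N) = (\<Prod>N=1..k - 1. N * r)"
    by (rule prod.cong) auto
  also have "\<dots> = (\<Prod>N=1..k - 1. N) * r ^ (k - 1)"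
    by (simp add: prod.distrib)
  also have "(\<Prod>N=k..n. if N < k then N * r else f N) = (\<Prod>N=k..n. f N)"
    by simp
  finally show ?thesis by (simp add: fact_prod)
qed

theorem mainTheorem2:
  fixes k r a b d n :: nat and I :: "nat set"
  assumes "k \<ge> 1" "r \<ge> 1" "1 \<le> a" "a \<le> b" "b \<le> k" "1 \<le> d" "d \<le> r"
    and "I \<subseteq> {1..r}" "card I = d" "n \<ge> k"
  shows "card (avoiders n r (\<Union>m\<in>{a..b}. Tset k r m I))
         = fact (k - 1) * r ^ (k - 1) * (\<Prod>j=k..n. d * (k + a - b - 1) + j * (r - d))"
proof -
  define g where "g N = (if N < k then N * r else d * (k + a - b - 1) + N * (r - d))" for N
  have "card (avoiders n r (\<Union>m\<in>{a..b}. Tset k r m I)) =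
        card {ps\<in>coloured_words {1..n} {1..r}.
                entries_avoid (\<lambda>x c Y. \<exists>m\<in>{a..b}. pattern_head k m I x c Y) ps}"
    unfolding avoiders_Union_Tset[OF assms(3,5)] ..
  also have "\<dots> = (\<Prod>N=1..card {1..n}. g N)"
  proof (rule card_coloured_words_entries_avoid)
    fix T assume "T \<subseteq> {1..n}"
    then show "card {p\<in>T \<times> {1..r}. \<not> (\<exists>m\<in>{a..b}. pattern_head k m I (fst p) (snd p) (T - {fst p}))} =
               g (card T)"
      using card_safe_entries[OF _ assms(3-5,8)] assms(9) by (simp add: g_def finite_subset)
  qed simp_all
  also have "\<dots> = fact (k - 1) * r ^ (k - 1) * (\<Prod>j=k..n. d * (k + a - b - 1) + j * (r - d))"
    using prod_if_less_split[OF assms(1,10)] by (simp add: g_def)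
  finally show ?thesis .
qed

end
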